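(* Let $f,g\in Sym$ be symmetric functions of degree at most a positive integer $n$. If $f[\Xi_\mu]=g[\Xi_\mu]$ for all partitions $\mu$ with $|\mu|\ge n$, then $f=g$ in $Sym$.
   Context: $Sym=\mathbb{Q}[p_1,p_2,\ldots]$ graded by $\deg p_k=k$. For $f\in Sym$ and a partition $\mu$, $f[\Xi_\mu]$ denotes $f$ evaluated at the multiset of eigenvalues of a permutation matrix of cycle type $\mu$, i.e. substituting $p_k\mapsto\sum_{d\mid k}d\,m_d(\mu)$, with $m_d(\mu)$ the number of parts of $\mu$ equal to $d$. *)

theory Defs
  imports Complex_Main "HOL-Library.Multiset" "HOL-Library.Poly_Mapping"
begin

text \<open>Sym = Q[p_1,p_2,...] is represented in its power-sum basis: an element is a finitely
supported map from multisets lambda of positive integers (the monomial p_lambda = prod p_{lambda_i})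
to rational coefficients.\<close>

type_synonym sym = "nat multiset \<Rightarrow>\<^sub>0 rat"

definition sym_elem :: "sym \<Rightarrow> bool" where
  "sym_elem f \<longleftrightarrow> (\<forall>l \<in> Poly_Mapping.keys f. 0 \<notin># l)"

definition sym_deg_le :: "sym \<Rightarrow> nat \<Rightarrow> bool" where
  "sym_deg_le f n \<longleftrightarrow> (\<forall>l \<in> Poly_Mapping.keys f. sum_mset l \<le> n)"

text \<open>Partitions: multisets of positive integers; |mu| = sum_mset mu, m_d(mu) = count mu d.\<close>
definition is_partition :: "nat multiset \<Rightarrow> bool" where
  "is_partition mu \<longleftrightarrow> 0 \<notin># mu"

text \<open>p_k[Xi_mu] = sum over d dividing k of d * m_d(mu).\<close>
definition pk_eval :: "nat \<Rightarrow> nat multiset \<Rightarrow> rat" where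
  "pk_eval k mu = (\<Sum>d \<in> {d. d dvd k}. of_nat d * of_nat (count mu d))"

definition sym_eval :: "sym \<Rightarrow> nat multiset \<Rightarrow> rat" where
  "sym_eval f mu = (\<Sum>l \<in> Poly_Mapping.keys f. Poly_Mapping.lookup f l * prod_mset (image_mset (\<lambda>k. pk_eval k mu) l))"

end

theory Submission imports Defs "HOL-Computational_Algebra.Polynomial" begin

text \<open>Adding to mu a part larger than every part occurring in f or g changes none of the
relevant p_k[Xi_mu], so f and g agree at every partition whose parts are bounded by some N,
whatever its size. It then suffices that the functions
mu |-> p_lambda[Xi_mu], for lambda with parts in {1..N}, are linearly independent on partitions
with parts in {1..N}. By induction on N: if lambda contains the part N exactly j times and
lambda' is the rest, then p_lambda[Xi_(mu + t*{N})] = p_lambda'[Xi_mu] (p_N[Xi_mu] + N t)^j is a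
polynomial in t, and comparing its coefficients reduces to the case N - 1.\<close>

definition pl_eval :: "nat multiset \<Rightarrow> nat multiset \<Rightarrow> rat" where
  "pl_eval l mu = (\<Prod>k\<in>#l. pk_eval k mu)"

lemma pl_eval_empty [simp]: "pl_eval {#} mu = 1"
  by (simp add: pl_eval_def)

lemma pl_eval_union: "pl_eval (l + l') mu = pl_eval l mu * pl_eval l' mu"
  by (simp add: pl_eval_def)

lemma pl_eval_replicate: "pl_eval (replicate_mset j k) mu = pk_eval k mu ^ j"
  by (simp add: pl_eval_def)

lemma sym_eval_eq_sum_superset:
  assumes "finite S" "Poly_Mapping.keys f \<subseteq> S"
  shows "sym_eval f mu = (\<Sum>l\<in>S. Poly_Mapping.lookup f l * pl_eval l mu)"
  unfolding sym_eval_def pl_eval_def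
  by (rule sum.mono_neutral_left[OF assms]) (simp add: in_keys_iff)

lemma pk_eval_union: "pk_eval k (mu + nu) = pk_eval k mu + pk_eval k nu"
  by (simp add: pk_eval_def sum.distrib algebra_simps)

lemma pk_eval_replicate:
  assumes "0 < k"
  shows "pk_eval k (replicate_mset t N) = (if N dvd k then of_nat N * of_nat t else 0)"
proof -
  have "pk_eval k (replicate_mset t N) = (\<Sum>d\<in>{d. d dvd k}. if d = N then of_nat N * of_nat t else 0)"
    unfolding pk_eval_def by (rule sum.cong) auto
  also have "\<dots> = (if N dvd k then of_nat N * of_nat t else 0)"
    using assms by (simp add: sum.delta')
  finally show ?thesis .
qed

lemma pk_eval_add_large_parts:
  assumes "0 < k" "k < N"
  shows "pk_eval k (mu + replicate_mset t N) = pk_eval k mu"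
proof -
  have "\<not> N dvd k" using assms by (auto dest: dvd_imp_le)
  then show ?thesis using assms by (simp add: pk_eval_union pk_eval_replicate)
qed

lemma pl_eval_add_large_parts:
  assumes "\<forall>k\<in>#l. 0 < k \<and> k < N"
  shows "pl_eval l (mu + replicate_mset t N) = pl_eval l mu"
  unfolding pl_eval_def
  by (rule arg_cong[where f = prod_mset], rule image_mset_cong)
    (use assms pk_eval_add_large_parts in auto)

lemma filter_neq_union_replicate: "{#k\<in>#l. k \<noteq> N#} + replicate_mset (count l N) N = l"
  using multiset_partition[of l "\<lambda>k. k \<noteq> N"] by (simp add: filter_eq_replicate_mset)

lemma pl_eval_add_top_parts:
  assumes "\<forall>k\<in>#l. 0 < k \<and> k \<le> N" "0 < N"
  shows "pl_eval l (mu + replicate_mset t N)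
           = pl_eval {#k\<in>#l. k \<noteq> N#} mu * (pk_eval N mu + of_nat N * of_nat t) ^ count l N"
proof -
  have "pl_eval l (mu + replicate_mset t N)
          = pl_eval {#k\<in>#l. k \<noteq> N#} (mu + replicate_mset t N) * pk_eval N (mu + replicate_mset t N) ^ count l N"
    by (subst filter_neq_union_replicate[symmetric, of l N])
      (simp only: pl_eval_union pl_eval_replicate)
  moreover have "pl_eval {#k\<in>#l. k \<noteq> N#} (mu + replicate_mset t N) = pl_eval {#k\<in>#l. k \<noteq> N#} mu"
    using assms(1) by (intro pl_eval_add_large_parts) auto
  moreover have "pk_eval N (mu + replicate_mset t N) = pk_eval N mu + of_nat N * of_nat t"
    using assms(2) by (simp add: pk_eval_union pk_eval_replicate)
  ultimately show ?thesis by simp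
qed

lemma coeff_zero_if_vanishes_on_infinite:
  fixes b :: "nat \<Rightarrow> 'a :: idom"
  assumes "finite J" "infinite Y" "\<forall>y\<in>Y. (\<Sum>i\<in>J. b i * y ^ i) = 0" "j \<in> J"
  shows "b j = 0"
proof -
  define p where "p = (\<Sum>i\<in>J. monom (b i) i)"
  have "Y \<subseteq> {x. poly p x = 0}"
    using assms(3) by (auto simp: p_def poly_sum poly_monom)
  then have "p = 0" using assms(2) poly_roots_finite finite_subset by blast
  moreover have "coeff p j = b j"
    using assms(1,4) by (simp add: p_def coeff_sum coeff_monom sum.delta)
  ultimately show ?thesis by simp
qed

lemma top_part_coefficients_vanish:
  assumes "finite S" and parts: "\<forall>l\<in>S. \<forall>k\<in>#l. 0 < k \<and> k \<le> Suc N"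
    and vanish: "\<forall>mu. (\<forall>d\<in>#mu. 0 < d \<and> d \<le> Suc N) \<longrightarrow> (\<Sum>l\<in>S. c l * pl_eval l mu) = 0"
    and mu: "\<forall>d\<in>#mu. 0 < d \<and> d \<le> N"
  shows "(\<Sum>l | l \<in> S \<and> count l (Suc N) = j. c l * pl_eval {#k\<in>#l. k \<noteq> Suc N#} mu) = 0"
    (is "?b j = 0")
proof (cases "j \<in> (\<lambda>l. count l (Suc N)) ` S")
  case True
  let ?y = "\<lambda>t::nat. pk_eval (Suc N) mu + of_nat (Suc N) * of_nat t"
  have "(\<Sum>i\<in>(\<lambda>l. count l (Suc N)) ` S. ?b i * ?y t ^ i) = 0" for t
  proof -
    have "(\<Sum>i\<in>(\<lambda>l. count l (Suc N)) ` S. ?b i * ?y t ^ i)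
            = (\<Sum>i\<in>(\<lambda>l. count l (Suc N)) ` S. \<Sum>l | l \<in> S \<and> count l (Suc N) = i.
                 c l * pl_eval {#k\<in>#l. k \<noteq> Suc N#} mu * ?y t ^ count l (Suc N))"
      by (auto simp: sum_distrib_right intro!: sum.cong)
    also have "\<dots> = (\<Sum>l\<in>S. c l * pl_eval {#k\<in>#l. k \<noteq> Suc N#} mu * ?y t ^ count l (Suc N))"
      using \<open>finite S\<close> by (intro sum.group) auto
    also have "\<dots> = (\<Sum>l\<in>S. c l * pl_eval l (mu + replicate_mset t (Suc N)))"
      using parts by (intro sum.cong) (simp_all add: pl_eval_add_top_parts)
    also have "\<dots> = 0"
      using mu by (intro vanish[rule_format]) (auto split: if_splits)
    finally show ?thesis .
  qed
  moreover have "infinite (range ?y)"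
    by (rule range_inj_infinite) (auto simp: inj_def)
  ultimately show ?thesis
    using \<open>finite S\<close> by (intro coeff_zero_if_vanishes_on_infinite[OF _ _ _ True]) auto
next
  case False
  then have "{l. l \<in> S \<and> count l (Suc N) = j} = {}" by auto
  then show ?thesis by (simp only: sum.empty)
qed

lemma pl_evals_linearly_independent:
  "finite S \<Longrightarrow> \<forall>l\<in>S. \<forall>k\<in>#l. 0 < k \<and> k \<le> N \<Longrightarrow>
   \<forall>mu. (\<forall>d\<in>#mu. 0 < d \<and> d \<le> N) \<longrightarrow> (\<Sum>l\<in>S. c l * pl_eval l mu) = 0 \<Longrightarrow>
   \<forall>l\<in>S. c l = 0"
proof (induction N arbitrary: S c)
  case 0
  have "l = {#}" if "l \<in> S" for l
  proof (rule ccontr)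
    assume "l \<noteq> {#}"
    then obtain k where "k \<in># l" by (rule multiset_nonemptyE)
    then show False using "0.prems"(2) that by auto
  qed
  then have "S \<subseteq> {{#}}" by blast
  then show ?case using "0.prems"(3)[rule_format, of "{#}"] by (auto simp: subset_singleton_iff)
next
  case (Suc N)
  show ?case
  proof
    fix l0 assume "l0 \<in> S"
    define j where "j = count l0 (Suc N)"
    define A where "A = {l\<in>S. count l (Suc N) = j}"
    define low where "low l = {#k\<in>#l. k \<noteq> Suc N#}" for l
    have low_inv: "low l + replicate_mset j (Suc N) = l" if "l \<in> A" for l
      using that filter_neq_union_replicate by (auto simp: A_def low_def)
    have "inj_on low A"
      by (rule inj_on_inverseI[where g = "\<lambda>l'. l' + replicate_mset j (Suc N)"]) (rule low_inv)
    have "\<forall>l'\<in>low ` A. c (l' + replicate_mset j (Suc N)) = 0"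
    proof (rule Suc.IH)
      show "finite (low ` A)" using Suc.prems(1) by (simp add: A_def)
      show "\<forall>l'\<in>low ` A. \<forall>k\<in>#l'. 0 < k \<and> k \<le> N"
      proof (intro ballI)
        fix l' k assume "l' \<in> low ` A" "k \<in># l'"
        then obtain l where "l \<in> S" "k \<in># l" "k \<noteq> Suc N" by (auto simp: A_def low_def)
        then show "0 < k \<and> k \<le> N" using Suc.prems(2) by fastforce
      qed
      show "\<forall>mu. (\<forall>d\<in>#mu. 0 < d \<and> d \<le> N) \<longrightarrow>
              (\<Sum>l'\<in>low ` A. c (l' + replicate_mset j (Suc N)) * pl_eval l' mu) = 0"
      proof (intro allI impI)
        fix mu assume "\<forall>d\<in>#mu. 0 < d \<and> d \<le> N"
        have "(\<Sum>l'\<in>low ` A. c (l' + replicate_mset j (Suc N)) * pl_eval l' mu)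
                = (\<Sum>l\<in>A. c (low l + replicate_mset j (Suc N)) * pl_eval (low l) mu)"
          by (simp add: sum.reindex[OF \<open>inj_on low A\<close>])
        also have "\<dots> = (\<Sum>l\<in>A. c l * pl_eval (low l) mu)"
          by (rule sum.cong) (simp_all add: low_inv)
        also have "\<dots> = 0"
          unfolding A_def low_def
          by (rule top_part_coefficients_vanish[OF Suc.prems]) fact
        finally show "(\<Sum>l'\<in>low ` A. c (l' + replicate_mset j (Suc N)) * pl_eval l' mu) = 0" .
      qed
    qed
    moreover have "l0 \<in> A" using \<open>l0 \<in> S\<close> by (simp add: A_def j_def)
    ultimately have "c (low l0 + replicate_mset j (Suc N)) = 0" by blast
    then show "c l0 = 0" by (simp add: low_inv[OF \<open>l0 \<in> A\<close>])
  qed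
qed

theorem corollary56:
  fixes f g :: sym and n :: nat
  assumes "n > 0"
    and "sym_elem f" and "sym_elem g"
    and "sym_deg_le f n" and "sym_deg_le g n"
    and "\<forall>mu. is_partition mu \<and> sum_mset mu \<ge> n \<longrightarrow> sym_eval f mu = sym_eval g mu"
  shows "f = g"
proof -
  define S where "S = Poly_Mapping.keys f \<union> Poly_Mapping.keys g"
  have "finite S" by (simp add: S_def)
  then have "finite (\<Union>l\<in>S. set_mset l)" by simp
  then obtain M where M: "\<forall>k\<in>(\<Union>l\<in>S. set_mset l). k \<le> M"
    by (auto simp: finite_nat_set_iff_bounded_le)
  have keys: "Poly_Mapping.keys f \<subseteq> S" "Poly_Mapping.keys g \<subseteq> S" by (auto simp: S_def)
  have parts: "\<forall>l\<in>S. \<forall>k\<in>#l. 0 < k \<and> k \<le> n + M"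
  proof (intro ballI)
    fix l k assume "l \<in> S" "k \<in># l"
    moreover have "0 \<notin># l" using \<open>l \<in> S\<close> assms(2,3) by (auto simp: S_def sym_elem_def)
    ultimately show "0 < k \<and> k \<le> n + M" using M by (metis UN_I gr0I trans_le_add2)
  qed
  have "\<forall>l\<in>S. Poly_Mapping.lookup f l - Poly_Mapping.lookup g l = 0"
  proof (rule pl_evals_linearly_independent[OF \<open>finite S\<close> parts], intro allI impI)
    fix mu assume mu: "\<forall>d\<in>#mu. 0 < d \<and> d \<le> n + M"
    define mu' where "mu' = mu + replicate_mset 1 (Suc (n + M))"
    have eval: "sym_eval h mu' = (\<Sum>l\<in>S. Poly_Mapping.lookup h l * pl_eval l mu)"
      if "Poly_Mapping.keys h \<subseteq> S" for h :: sym
      unfolding sym_eval_eq_sum_superset[OF \<open>finite S\<close> that] mu'_def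
      using parts
      by (intro sum.cong refl arg_cong[where f = "(*) _"] pl_eval_add_large_parts) (auto simp: less_Suc_eq_le)
    have "is_partition mu'" using mu by (auto simp: is_partition_def mu'_def)
    moreover have "n \<le> sum_mset mu'" by (simp add: mu'_def)
    ultimately have "sym_eval f mu' = sym_eval g mu'" using assms(6) by blast
    then show "(\<Sum>l\<in>S. (Poly_Mapping.lookup f l - Poly_Mapping.lookup g l) * pl_eval l mu) = 0"
      by (simp add: eval[OF keys(1)] eval[OF keys(2)] left_diff_distrib sum_subtractf)
  qed
  then show ?thesis
    using keys by (intro poly_mapping_eqI) (metis eq_iff_diff_eq_0 in_mono not_in_keys_iff_lookup_eq_zero)
qed

end
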